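(* (i) For any positive integers $a,r$ there exists an $(ra^2,2,ra,r)$-PSEDF in $\mathbb{Z}_{ra^2}$. (ii) For any positive integers $\lambda,a$ there exists a non-disjoint $(\lambda a^2,2,\lambda a,\lambda)$-SEDF in $\mathbb{Z}_{\lambda a^2}$. (iii) For any positive integer $k$, the sets $\{0,1,\dots,k-1\}$ and $\{0,k,2k,\dots,(k-1)k\}$ form a non-disjoint $(k^2,2,k,1)$-SEDF in $\mathbb{Z}_{k^2}$.
   Context: Groups are written additively. For subsets $A,B$ of a group $G$, $\Delta(A,B)$ is the multiset $\{a-b:a\in A,b\in B\}$ and $\lambda G$ is the multiset with each element of $G$ exactly $\lambda$ times. For $G$ of order $v$ and $m>1$, a family of $k$-subsets $\{A_1,\dots,A_m\}$ of $G$ is a $(v,m,k,\lambda)$-PSEDF if $\Delta(A_i,A_j)=\lambda G$ for every $i\neq j$; it is a non-disjoint $(v,m,k,\lambda)$-SEDF if for each $i$ the multiset union $\bigcup_{j\neq i}\Delta(A_i,A_j)$ equals $\lambda G$. The sets need not be disjoint. *)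

theory Defs
  imports Main "HOL-Library.Multiset"
begin

text \<open>The cyclic group Z_n is modelled by the carrier {0..<n} of naturals with
  addition/subtraction modulo n.  A family {A_1,...,A_m} is a list of subsets.\<close>

definition zsub :: "nat \<Rightarrow> nat \<Rightarrow> nat \<Rightarrow> nat" where
  "zsub n a b = (a + n - b mod n) mod n"

definition Delta :: "nat \<Rightarrow> nat set \<Rightarrow> nat set \<Rightarrow> nat multiset" where
  "Delta n A B = image_mset (\<lambda>(a, b). zsub n a b) (mset_set (A \<times> B))"

definition lam_group :: "nat \<Rightarrow> nat \<Rightarrow> nat multiset" where
  "lam_group n lam = repeat_mset lam (mset_set {0..<n})"

definition is_family :: "nat \<Rightarrow> nat \<Rightarrow> nat \<Rightarrow> nat set list \<Rightarrow> bool" where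
  "is_family n m k As \<longleftrightarrow> 1 < m \<and> length As = m \<and>
     (\<forall>i<m. As ! i \<subseteq> {0..<n} \<and> card (As ! i) = k)"

definition is_PSEDF :: "nat \<Rightarrow> nat \<Rightarrow> nat \<Rightarrow> nat \<Rightarrow> nat set list \<Rightarrow> bool" where
  "is_PSEDF n m k lam As \<longleftrightarrow> is_family n m k As \<and>
     (\<forall>i<m. \<forall>j<m. i \<noteq> j \<longrightarrow> Delta n (As ! i) (As ! j) = lam_group n lam)"

text \<open>(Non-disjoint) SEDF: the sets need not be disjoint.\<close>
definition is_SEDF :: "nat \<Rightarrow> nat \<Rightarrow> nat \<Rightarrow> nat \<Rightarrow> nat set list \<Rightarrow> bool" where
  "is_SEDF n m k lam As \<longleftrightarrow> is_family n m k As \<and>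
     (\<forall>i<m. (\<Sum>j\<in>{0..<m} - {i}. Delta n (As ! i) (As ! j)) = lam_group n lam)"

end

theory Submission
  imports Defs
begin

text \<open>Let \<open>H = d\<int>\<^sub>n\<close> with \<open>d\<close> dividing \<open>n\<close>. A difference \<open>x - y\<close> with \<open>y \<in> H\<close> equals \<open>g\<close>
  exactly when \<open>x \<in> g + H\<close>, so \<open>\<Delta>(A,H)\<close> (and likewise \<open>\<Delta>(H,A)\<close>) is \<open>\<lambda>G\<close> as soon as \<open>A\<close>
  meets every coset of \<open>H\<close> in exactly \<open>\<lambda>\<close> points. For \<open>n = r a\<^sup>2\<close>, \<open>d = a\<close> and
  \<open>A = {x. x mod a\<^sup>2 < a}\<close>, the coset \<open>i + a\<int>\<close> (\<open>i < a\<close>) meets \<open>A\<close> in the \<open>r\<close> points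
  \<open>i + h a\<^sup>2\<close>, and \<open>|A| = |H| = r a\<close>. For two sets a PSEDF is an SEDF, and (iii) is the
  case \<open>r = 1\<close>.\<close>

lemma count_image_mset_mset_set:
  "finite S \<Longrightarrow> count (image_mset f (mset_set S)) y = card {x \<in> S. f x = y}"
  by (simp add: count_image_mset vimage_def Collect_conj_eq Int_commute)

lemma int_zsub: "0 < n \<Longrightarrow> int (zsub n a b) = (int a - int b) mod int n"
proof -
  assume "0 < n"
  then have "b mod n \<le> a + n" by (simp add: less_imp_le_nat trans_le_add2)
  then have "int (zsub n a b) = (int a + int n - int (b mod n)) mod int n"
    unfolding zsub_def by (simp add: of_nat_mod of_nat_diff)
  also have "\<dots> = (int a - int (b mod n) + int n) mod int n"
    by (simp add: algebra_simps)
  also have "\<dots> = (int a - int b) mod int n"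
    by (simp add: of_nat_mod mod_diff_right_eq)
  finally show ?thesis .
qed

lemma zsub_less: "0 < n \<Longrightarrow> zsub n a b < n"
  unfolding zsub_def by simp

lemma zsub_eq_iff_cong:
  assumes "g < n"
  shows "zsub n x y = g \<longleftrightarrow> int n dvd int x - int y - int g"
proof -
  have "zsub n x y = g \<longleftrightarrow> (int x - int y) mod int n = int g mod int n"
    using assms int_zsub[of n x y] by auto
  then show ?thesis by (simp add: mod_eq_dvd_iff)
qed

lemma zsub_eq_iff_swap: "y < n \<Longrightarrow> g < n \<Longrightarrow> zsub n x y = g \<longleftrightarrow> zsub n x g = y"
  by (simp add: zsub_eq_iff_cong algebra_simps)

lemma zsub_eq_iff_add:
  assumes "x < n" "g < n"
  shows "zsub n x y = g \<longleftrightarrow> (y + g) mod n = x"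
proof -
  have "(y + g) mod n = x \<longleftrightarrow> int x mod int n = (int y + int g) mod int n"
    using assms by (metis mod_less of_nat_add of_nat_eq_iff zmod_int)
  also have "\<dots> \<longleftrightarrow> zsub n x y = g"
    unfolding mod_eq_dvd_iff using assms by (simp add: zsub_eq_iff_cong algebra_simps)
  finally show ?thesis by simp
qed

lemma card_pairs_snd_eq_fun: "card {(x, y) \<in> A \<times> B. y = f x} = card {x \<in> A. f x \<in> B}"
proof -
  have "{(x, y) \<in> A \<times> B. y = f x} = (\<lambda>x. (x, f x)) ` {x \<in> A. f x \<in> B}"
    by auto
  then show ?thesis by (simp add: card_image inj_on_def)
qed

lemma card_pairs_fst_eq_fun: "card {(x, y) \<in> A \<times> B. x = f y} = card {y \<in> B. f y \<in> A}"
proof -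
  have "{(x, y) \<in> A \<times> B. x = f y} = (\<lambda>y. (f y, y)) ` {y \<in> B. f y \<in> A}"
    by auto
  then show ?thesis by (simp add: card_image inj_on_def)
qed

lemma count_Delta:
  "finite A \<Longrightarrow> finite B \<Longrightarrow> count (Delta n A B) g = card {(x, y) \<in> A \<times> B. zsub n x y = g}"
  unfolding Delta_def
  by (auto simp: count_image_mset_mset_set intro!: arg_cong[where f = card])

lemma count_Delta_eq_card_fst:
  assumes "A \<subseteq> {0..<n}" "B \<subseteq> {0..<n}" "g < n"
  shows "count (Delta n A B) g = card {x \<in> A. zsub n x g \<in> B}"
proof -
  have "zsub n x y = g \<longleftrightarrow> y = zsub n x g" if "y \<in> B" for x y
    using zsub_eq_iff_swap[of y n g x] that assms by auto
  then have "{(x, y) \<in> A \<times> B. zsub n x y = g} = {(x, y) \<in> A \<times> B. y = zsub n x g}"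
    by auto
  with assms show ?thesis
    by (simp only: count_Delta card_pairs_snd_eq_fun finite_subset finite_atLeastLessThan)
qed

lemma count_Delta_eq_card_snd:
  assumes "A \<subseteq> {0..<n}" "B \<subseteq> {0..<n}" "g < n"
  shows "count (Delta n A B) g = card {y \<in> B. (y + g) mod n \<in> A}"
proof -
  have "zsub n x y = g \<longleftrightarrow> x = (y + g) mod n" if "x \<in> A" for x y
    using zsub_eq_iff_add[of x n g y] that assms by auto
  then have "{(x, y) \<in> A \<times> B. zsub n x y = g} = {(x, y) \<in> A \<times> B. x = (y + g) mod n}"
    by auto
  with assms show ?thesis
    by (simp only: count_Delta card_pairs_fst_eq_fun finite_subset finite_atLeastLessThan)
qed

lemma dvd_zsub_iff:
  assumes "d dvd n" "0 < n"
  shows "d dvd zsub n x g \<longleftrightarrow> x mod d = g mod d"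
proof -
  have "d dvd zsub n x g \<longleftrightarrow> int d dvd (int x - int g) mod int n"
    using assms by (metis int_zsub of_nat_dvd_iff)
  also have "\<dots> \<longleftrightarrow> int d dvd int x - int g"
    using assms by (simp add: dvd_mod_iff)
  also have "\<dots> \<longleftrightarrow> x mod d = g mod d"
    by (metis mod_eq_dvd_iff of_nat_eq_iff zmod_int)
  finally show ?thesis .
qed

lemma dvd_add_iff_mod_eq_neg:
  assumes "0 < d"
  shows "d dvd y + g \<longleftrightarrow> y mod d = zsub d 0 g"
proof -
  have "zsub d 0 g = y mod d \<longleftrightarrow> (g + y mod d) mod d = 0"
    using zsub_eq_iff_add[of 0 d "y mod d" g] assms by simp
  then show ?thesis
    by (auto simp: dvd_eq_mod_eq_0 mod_add_right_eq add.commute)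
qed

lemma count_Delta_eq_0: "0 < n \<Longrightarrow> n \<le> g \<Longrightarrow> count (Delta n A B) g = 0"
  unfolding Delta_def by (auto simp: count_eq_zero_iff dest: zsub_less[of n] leD)

lemma count_lam_group: "count (lam_group n lam) g = (if g < n then lam else 0)"
  unfolding lam_group_def by simp

lemma Delta_multiples_right:
  assumes "d dvd n" "0 < n" "A \<subseteq> {0..<n}"
    and classes: "\<And>i. i < d \<Longrightarrow> card {x \<in> A. x mod d = i} = lam"
  shows "Delta n A {y \<in> {0..<n}. d dvd y} = lam_group n lam"
proof (rule multiset_eqI)
  fix g
  show "count (Delta n A {y \<in> {0..<n}. d dvd y}) g = count (lam_group n lam) g"
  proof (cases "g < n")
    case True
    have "0 < d" using assms by (simp add: dvd_pos_nat)
    have "count (Delta n A {y \<in> {0..<n}. d dvd y}) g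
        = card {x \<in> A. zsub n x g \<in> {y \<in> {0..<n}. d dvd y}}"
      using assms True by (intro count_Delta_eq_card_fst) auto
    also have "\<dots> = card {x \<in> A. x mod d = g mod d}"
      using assms by (simp add: zsub_less dvd_zsub_iff)
    also have "\<dots> = lam"
      using classes \<open>0 < d\<close> by simp
    finally show ?thesis using True by (simp add: count_lam_group)
  next
    case False
    then show ?thesis
      using assms by (simp add: count_Delta_eq_0 count_lam_group)
  qed
qed

lemma Delta_multiples_left:
  assumes "d dvd n" "0 < n" "A \<subseteq> {0..<n}"
    and classes: "\<And>i. i < d \<Longrightarrow> card {x \<in> A. x mod d = i} = lam"
  shows "Delta n {y \<in> {0..<n}. d dvd y} A = lam_group n lam"
proof (rule multiset_eqI)
  fix g
  show "count (Delta n {y \<in> {0..<n}. d dvd y} A) g = count (lam_group n lam) g"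
  proof (cases "g < n")
    case True
    have "0 < d" using assms by (simp add: dvd_pos_nat)
    have "count (Delta n {y \<in> {0..<n}. d dvd y} A) g
        = card {x \<in> A. (x + g) mod n \<in> {y \<in> {0..<n}. d dvd y}}"
      using assms True by (intro count_Delta_eq_card_snd) auto
    also have "\<dots> = card {x \<in> A. x mod d = zsub d 0 g}"
      using assms \<open>0 < d\<close> by (simp add: dvd_mod_iff dvd_add_iff_mod_eq_neg)
    also have "\<dots> = lam"
      using classes \<open>0 < d\<close> by (simp add: zsub_less)
    finally show ?thesis using True by (simp add: count_lam_group)
  next
    case False
    then show ?thesis
      using assms by (simp add: count_Delta_eq_0 count_lam_group)
  qed
qed

lemma card_residue_class:
  assumes "i < m"
  shows "card {x \<in> {0..<r * m}. x mod m = i} = r"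
proof -
  have "{x \<in> {0..<r * m}. x mod m = i} = (\<lambda>h. h * m + i) ` {0..<r}"
  proof (intro set_eqI iffI)
    fix x assume "x \<in> {x \<in> {0..<r * m}. x mod m = i}"
    then have "x = x div m * m + i" "x div m < r"
      by (auto simp: less_mult_imp_div_less)
    then show "x \<in> (\<lambda>h. h * m + i) ` {0..<r}" by (metis atLeastLessThan_iff image_eqI zero_le)
  next
    fix x assume "x \<in> (\<lambda>h. h * m + i) ` {0..<r}"
    then obtain h where "h < r" "x = h * m + i" by auto
    moreover have "Suc h * m \<le> r * m"
      using \<open>h < r\<close> by (intro mult_le_mono1) simp
    then have "h * m + i < r * m"
      using assms by simp
    ultimately show "x \<in> {x \<in> {0..<r * m}. x mod m = i}" using assms by simp
  qed
  moreover have "inj_on (\<lambda>h. h * m + i) {0..<r}"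
    using assms by (auto simp: inj_on_def)
  ultimately show ?thesis by (simp add: card_image)
qed

lemma card_eq_mult_if_residue_classes:
  assumes "finite A" "0 < d" "\<And>i. i < d \<Longrightarrow> card {x \<in> A. x mod d = i} = lam"
  shows "card A = d * lam"
proof -
  have "(\<lambda>x. x mod d) ` A \<subseteq> {..<d}"
    using assms by auto
  then have "card A = (\<Sum>i<d. card {x \<in> A. x mod d = i})"
    using sum.group[OF assms(1) finite_lessThan, where h = "\<lambda>_. 1::nat"] by simp
  also have "\<dots> = d * lam" using assms by simp
  finally show ?thesis .
qed

lemma is_SEDF_if_is_PSEDF_2:
  assumes "is_PSEDF n 2 k lam As"
  shows "is_SEDF n 2 k lam As"
proof -
  have "{0..<2::nat} - {0} = {1}" "{0..<2::nat} - {1} = {0}"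
    by auto
  with assms show ?thesis
    unfolding is_PSEDF_def is_SEDF_def by (auto simp: less_2_cases_iff)
qed

lemma PSEDF_with_multiples:
  assumes "d dvd n" "0 < n" "A \<subseteq> {0..<n}"
    and classes: "\<And>i. i < d \<Longrightarrow> card {x \<in> A. x mod d = i} = lam"
    and "d * lam = n div d"
  shows "is_PSEDF n 2 (n div d) lam [A, {y \<in> {0..<n}. d dvd y}]"
proof -
  have "0 < d" using assms by (simp add: dvd_pos_nat)
  have "card A = n div d"
    using card_eq_mult_if_residue_classes[OF finite_subset[OF \<open>A \<subseteq> _\<close>] \<open>0 < d\<close> classes]
      assms by simp
  moreover have "card {y \<in> {0..<n}. d dvd y} = n div d"
    using card_residue_class[OF \<open>0 < d\<close>, of "n div d"] \<open>d dvd n\<close>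
    by (simp add: dvd_eq_mod_eq_0)
  ultimately show ?thesis
    unfolding is_PSEDF_def is_family_def
    using Delta_multiples_left[OF assms(1-4)] Delta_multiples_right[OF assms(1-4)] assms(3)
    by (auto simp: less_2_cases_iff)
qed

lemma PSEDF_low_residues_multiples:
  assumes "0 < a" "0 < r"
  shows "is_PSEDF (r * a^2) 2 (r * a) r
           [{x \<in> {0..<r * a^2}. x mod a^2 < a}, {y \<in> {0..<r * a^2}. a dvd y}]"
proof -
  have classes: "card {x \<in> {x \<in> {0..<r * a^2}. x mod a^2 < a}. x mod a = i} = r"
    if "i < a" for i
  proof -
    have "x mod a^2 < a \<and> x mod a = i \<longleftrightarrow> x mod a^2 = i" for x
      using that by (metis dvd_triv_left mod_less mod_mod_cancel power2_eq_square)
    then have "{x \<in> {x \<in> {0..<r * a^2}. x mod a^2 < a}. x mod a = i}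
        = {x \<in> {0..<r * a^2}. x mod a^2 = i}"
      by auto
    also have "card \<dots> = r"
      using that by (intro card_residue_class) (simp add: power2_eq_square less_le_trans)
    finally show ?thesis .
  qed
  have "r * a^2 div a = r * a"
    by (simp add: power2_eq_square)
  moreover have "is_PSEDF (r * a^2) 2 (r * a^2 div a) r
           [{x \<in> {0..<r * a^2}. x mod a^2 < a}, {y \<in> {0..<r * a^2}. a dvd y}]"
    using assms classes \<open>r * a^2 div a = r * a\<close>
    by (intro PSEDF_with_multiples) (auto simp: power2_eq_square)
  ultimately show ?thesis by simp
qed

theorem corollary3p2:
  shows "(\<forall>a r :: nat. 0 < a \<and> 0 < r \<longrightarrow>
            (\<exists>As. is_PSEDF (r * a^2) 2 (r * a) r As))
       \<and> (\<forall>lam a :: nat. 0 < lam \<and> 0 < a \<longrightarrow>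
            (\<exists>As. is_SEDF (lam * a^2) 2 (lam * a) lam As))
       \<and> (\<forall>k :: nat. 0 < k \<longrightarrow>
            is_SEDF (k^2) 2 k 1 [{0..<k}, (\<lambda>j. j * k) ` {0..<k}])"
proof (intro conjI allI impI)
  fix a r :: nat assume "0 < a \<and> 0 < r"
  then show "\<exists>As. is_PSEDF (r * a^2) 2 (r * a) r As"
    using PSEDF_low_residues_multiples by blast
next
  fix lam a :: nat assume "0 < lam \<and> 0 < a"
  then show "\<exists>As. is_SEDF (lam * a^2) 2 (lam * a) lam As"
    using PSEDF_low_residues_multiples is_SEDF_if_is_PSEDF_2 by blast
next
  fix k :: nat assume "0 < k"
  then have "k \<le> k^2"
    by (simp add: power2_eq_square)
  then have "{x \<in> {0..<1 * k^2}. x mod k^2 < k} = {0..<k}"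
    by auto
  moreover have "{y \<in> {0..<1 * k^2}. k dvd y} = (\<lambda>j. j * k) ` {0..<k}"
    by (auto simp: power2_eq_square)
  ultimately show "is_SEDF (k^2) 2 k 1 [{0..<k}, (\<lambda>j. j * k) ` {0..<k}]"
    using is_SEDF_if_is_PSEDF_2 PSEDF_low_residues_multiples[OF \<open>0 < k\<close>, of 1] by simp
qed

end
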